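(* Let $p\in(0,1)$ be fixed and let $c>0$, $\varepsilon>0$. There is a constant $K>0$ such that with high probability the following holds for every induced subgraph $H$ of $G(n,p)$ on at least $\varepsilon n$ vertices and every spanning subgraph $F\subseteq H$ for which there is a spanning subgraph $\tilde H$ of $H$, obtained from $H$ by removing at most $cn$ edges, such that $F$ is $C_4$-saturated in $\tilde H$: (1) $F$ has at most $\lfloor\frac{3}{p}\ln n\rfloor$ isolated vertices; (2) the number of vertices of degree $1$ in $F$ is at most $K\left(\sqrt{|E(F)|}\ln n+\frac{n}{\ln n}\right)$.
   Context: $G(n,p)$ is the binomial random graph on $[n]$ with edge probability $p$; with high probability means with probability tending to $1$ as $n\to\infty$. A spanning subgraph $F$ of a graph $G$ is $C_4$-saturated in $G$ if $F$ contains no $4$-cycle $C_4$ but adding to $F$ any edge of $G$ not in $F$ creates a copy of $C_4$. *)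

theory Defs
  imports "HOL-Probability.Probability"
begin

definition all_edges :: "nat \<Rightarrow> nat set set" where
  "all_edges n = {e. \<exists>i j. i < j \<and> j < n \<and> e = {i, j}}"

text \<open>Binomial random graph G(n,p) on vertex set {0..<n}, as a distribution on edge sets:
  every potential edge is present independently with probability p.\<close>
definition Gnp :: "nat \<Rightarrow> real \<Rightarrow> nat set set pmf" where
  "Gnp n p = map_pmf (\<lambda>f. {e \<in> all_edges n. f e})
                (Pi_pmf (all_edges n) False (\<lambda>_. bernoulli_pmf p))"

definition whp :: "real \<Rightarrow> (nat \<Rightarrow> nat set set \<Rightarrow> bool) \<Rightarrow> bool" where
  "whp p P \<longleftrightarrow> ((\<lambda>n. measure_pmf.prob (Gnp n p) {E. P n E}) \<longlonglongrightarrow> 1)"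

definition induced_edges :: "nat set set \<Rightarrow> nat set \<Rightarrow> nat set set" where
  "induced_edges E S = {e \<in> E. e \<subseteq> S}"

definition has_C4 :: "nat set set \<Rightarrow> bool" where
  "has_C4 F \<longleftrightarrow> (\<exists>a b c d. distinct [a, b, c, d] \<and>
      {a, b} \<in> F \<and> {b, c} \<in> F \<and> {c, d} \<in> F \<and> {d, a} \<in> F)"

definition C4_saturated_in :: "nat set set \<Rightarrow> nat set set \<Rightarrow> bool" where
  "C4_saturated_in F G \<longleftrightarrow> F \<subseteq> G \<and> \<not> has_C4 F \<and> (\<forall>e \<in> G - F. has_C4 (insert e F))"

definition degree :: "nat set set \<Rightarrow> nat \<Rightarrow> nat" where
  "degree F v = card {u. {v, u} \<in> F}"

end

theory Submission
  imports Defs "HOL-Real_Asymp.Real_Asymp"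
begin

(* Two properties of G(n,p) fail with probability o(1), by a union bound over the lower-tail
   estimate P(|M \<inter> E| \<le> j) \<le> exp (j - p |M| / 2): every set T of at least 16 ln n / p + 1
   vertices spans more than p/4 * C(|T|, 2) edges, and between any k = floor (3 ln n / p) + 1
   vertices and any disjoint set of at least \<epsilon>n/2 vertices there are more than cn edges.

   Let F be C4-saturated in H, obtained from G[S] by removing at most cn edges. An edge of G[S]
   at a vertex isolated in F cannot be in H, since adding it to F closes no 4-cycle; hence k
   isolated vertices would be incident to more than cn removed edges. If an edge vu of H not in F
   starts at a leaf v with stem w, the 4-cycle it closes is v w x u, so u is adjacent to a
   neighbour of w. Consequently, among the leaves incident to at most ln n removed edges, those
   with a common stem span a graph of maximum degree ln n, and those whose stem has degree at most
   sqrt |F| span a graph of maximum degree O(sqrt |F| ln n / p); by the first property these sets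
   have O(ln n / p) and O(sqrt |F| ln n / p^2) elements. At most 2 sqrt |F| stems have larger
   degree, and at most 2cn / ln n leaves are incident to more removed edges. *)

section \<open>Edges, 4-cycles and degrees\<close>

lemma doubleton_in_all_edges_iff: "{x, y} \<in> all_edges n \<longleftrightarrow> x \<noteq> y \<and> x < n \<and> y < n"
  unfolding all_edges_def by (auto simp: doubleton_eq_iff) (metis linorder_neqE_nat)

lemma finite_all_edges: "finite (all_edges n)"
proof (rule finite_subset)
  show "all_edges n \<subseteq> Pow {0..<n}"
    unfolding all_edges_def by auto
qed simp

lemma set_pmf_Gnp: "set_pmf (Gnp n p) \<subseteq> Pow (all_edges n)"
  unfolding Gnp_def by auto

lemma finite_set_pmf_Gnp: "finite (set_pmf (Gnp n p))"
  using set_pmf_Gnp finite_all_edges by (meson finite_Pow_iff finite_subset)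

lemma C4_path_through_edge:
  assumes "distinct [v, u, c, d]"
    and "{u, c} \<in> insert {v, u} F" "{c, d} \<in> insert {v, u} F" "{d, v} \<in> insert {v, u} F"
  shows "\<exists>y x. {v, y} \<in> F \<and> {y, x} \<in> F \<and> {x, u} \<in> F \<and> distinct [v, u, x, y]"
proof -
  have "{v, d} \<in> F" "{d, c} \<in> F" "{c, u} \<in> F"
    using assms by (auto simp: doubleton_eq_iff insert_commute)
  then show ?thesis
    using assms(1) by auto
qed

lemma C4_of_insert:
  assumes "\<not> has_C4 F" "has_C4 (insert {v, u} F)"
  shows "\<exists>y x. {v, y} \<in> F \<and> {y, x} \<in> F \<and> {x, u} \<in> F \<and> distinct [v, u, x, y]"
proof -
  obtain a b c d where abcd: "distinct [a, b, c, d]" and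
    e: "{a, b} \<in> insert {v, u} F" "{b, c} \<in> insert {v, u} F"
      "{c, d} \<in> insert {v, u} F" "{d, a} \<in> insert {v, u} F"
    using assms(2) unfolding has_C4_def by (elim exE conjE) (rule that)
  have not_all: "\<not> ({a, b} \<in> F \<and> {b, c} \<in> F \<and> {c, d} \<in> F \<and> {d, a} \<in> F)"
  proof
    assume "{a, b} \<in> F \<and> {b, c} \<in> F \<and> {c, d} \<in> F \<and> {d, a} \<in> F"
    then have "has_C4 F"
      using abcd unfolding has_C4_def by (intro exI[of _ a] exI[of _ b] exI[of _ c] exI[of _ d]) simp
    then show False using assms(1) by contradiction
  qed
  have "{a, b} = {v, u} \<or> {b, c} = {v, u} \<or> {c, d} = {v, u} \<or> {d, a} = {v, u}"
  proof (rule ccontr)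
    assume "\<not> ?thesis"
    then have "{a, b} \<in> F" "{b, c} \<in> F" "{c, d} \<in> F" "{d, a} \<in> F"
      using e by simp_all
    with not_all show False by blast
  qed
  then consider "a = v \<and> b = u" | "a = u \<and> b = v" | "b = v \<and> c = u" | "b = u \<and> c = v"
    | "c = v \<and> d = u" | "c = u \<and> d = v" | "d = v \<and> a = u" | "d = u \<and> a = v"
    unfolding doubleton_eq_iff by argo
  then show ?thesis
  proof cases
    case 1 then show ?thesis using C4_path_through_edge[of v u c d F] abcd e by simp
  next
    case 2 then show ?thesis using C4_path_through_edge[of v u d c F] abcd e by (simp add: insert_commute)
  next
    case 3 then show ?thesis using C4_path_through_edge[of v u d a F] abcd e by (simp add: insert_commute)
  next
    case 4 then show ?thesis using C4_path_through_edge[of v u a d F] abcd e by (simp add: insert_commute)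
  next
    case 5 then show ?thesis using C4_path_through_edge[of v u a b F] abcd e by (simp add: insert_commute)
  next
    case 6 then show ?thesis using C4_path_through_edge[of v u b a F] abcd e by (simp add: insert_commute)
  next
    case 7 then show ?thesis using C4_path_through_edge[of v u b c F] abcd e by (simp add: insert_commute)
  next
    case 8 then show ?thesis using C4_path_through_edge[of v u c b F] abcd e by (simp add: insert_commute)
  qed
qed

lemma finite_neighbours: "finite F \<Longrightarrow> finite {u. {v, u} \<in> F}"
proof -
  assume "finite F"
  moreover have "inj_on (\<lambda>u. {v, u}) {u. {v, u} \<in> F}"
    by (auto simp: inj_on_def doubleton_eq_iff)
  ultimately show ?thesis
    by (metis (no_types, lifting) finite_imageD finite_subset image_subset_iff mem_Collect_eq)
qed

lemma sum_degree_le: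
  assumes "finite F" "finite V"
  shows "(\<Sum>v\<in>V. degree F v) \<le> 2 * card F"
proof -
  have "(\<Sum>v\<in>V. degree F v) = card (SIGMA v:V. {u. {v, u} \<in> F})"
    using assms by (simp add: degree_def finite_neighbours)
  also have "\<dots> \<le> card (F \<times> (UNIV :: bool set))"
  proof (rule card_inj_on_le)
    show "inj_on (\<lambda>(v, u). ({v, u}, v < u)) (SIGMA v:V. {u. {v, u} \<in> F})"
      by (auto simp: inj_on_def doubleton_eq_iff)
  qed (use assms in auto)
  also have "\<dots> = 2 * card F"
    by (simp add: card_cartesian_product)
  finally show ?thesis .
qed

lemma card_degree_gt_le:
  assumes "finite F" "finite V" "0 \<le> d"
  shows "real (card {v \<in> V. d < real (degree F v)}) * d \<le> 2 * real (card F)"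
proof -
  have "real (card {v \<in> V. d < real (degree F v)}) * d = (\<Sum>v | v \<in> V \<and> d < real (degree F v). d)"
    by simp
  also have "\<dots> \<le> (\<Sum>v | v \<in> V \<and> d < real (degree F v). real (degree F v))"
    by (rule sum_mono) simp
  also have "\<dots> \<le> (\<Sum>v\<in>V. real (degree F v))"
    by (rule sum_mono2) (use assms(2) in auto)
  also have "\<dots> \<le> 2 * real (card F)"
    using sum_degree_le[OF assms(1,2)] by (simp flip: of_nat_sum)
  finally show ?thesis .
qed

definition pairs :: "nat set \<Rightarrow> nat set set" where
  "pairs T = {e. e \<subseteq> T \<and> card e = 2}"

lemma card_pairs:
  assumes "finite T"
  shows "2 * real (card (pairs T)) = real (card T) * (real (card T) - 1)"
proof -
  have "card (pairs T) = card T choose 2"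
    unfolding pairs_def using assms by (rule n_subsets)
  then show ?thesis
    using gbinomial_absorption[of 1 "real (card T)"] by (simp add: binomial_gbinomial numeral_2_eq_2)
qed

lemma pairs_subset_all_edges: "T \<subseteq> {0..<n} \<Longrightarrow> pairs T \<subseteq> all_edges n"
  unfolding pairs_def by (auto simp: card_2_iff doubleton_in_all_edges_iff subset_iff)

lemma card_pairs_Int_le_sum_degree:
  assumes "finite T"
  shows "card (pairs T \<inter> E) \<le> (\<Sum>v\<in>T. degree (induced_edges E T) v)"
proof -
  let ?\<Sigma> = "SIGMA v:T. {u. {v, u} \<in> induced_edges E T}"
  have fibres: "finite {u. {v, u} \<in> induced_edges E T}" for v
    using assms by (rule rev_finite_subset) (auto simp: induced_edges_def)
  have fin: "finite ?\<Sigma>"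
    using assms fibres by (rule finite_SigmaI)
  have "pairs T \<inter> E \<subseteq> (\<lambda>(v, u). {v, u}) ` ?\<Sigma>"
    unfolding pairs_def induced_edges_def by (auto simp: card_2_iff)
  then have "card (pairs T \<inter> E) \<le> card ((\<lambda>(v, u). {v, u}) ` ?\<Sigma>)"
    using fin by (intro card_mono) auto
  also have "\<dots> \<le> card ?\<Sigma>"
    using fin by (rule card_image_le)
  also have "\<dots> = (\<Sum>v\<in>T. degree (induced_edges E T) v)"
    using assms fibres by (simp add: degree_def)
  finally show ?thesis .
qed

definition cross :: "nat set \<Rightarrow> nat set \<Rightarrow> nat set set" where
  "cross I Y = {{i, y} | i y. i \<in> I \<and> y \<in> Y}"

lemma card_cross:
  assumes "I \<inter> Y = {}" "finite I" "finite Y"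
  shows "card (cross I Y) = card I * card Y"
proof -
  have "cross I Y = (\<lambda>(i, y). {i, y}) ` (I \<times> Y)"
    unfolding cross_def by auto
  moreover have "inj_on (\<lambda>(i, y). {i, y}) (I \<times> Y)"
    using assms(1) by (auto simp: inj_on_def doubleton_eq_iff)
  ultimately show ?thesis
    by (simp add: card_image card_cartesian_product)
qed

lemma cross_subset_all_edges:
  assumes "I \<inter> Y = {}" "I \<subseteq> {0..<n}" "Y \<subseteq> {0..<n}"
  shows "cross I Y \<subseteq> all_edges n"
proof
  fix e assume "e \<in> cross I Y"
  then obtain i y where "e = {i, y}" "i \<in> I" "y \<in> Y"
    unfolding cross_def by blast
  with assms show "e \<in> all_edges n"
    by (auto simp: doubleton_in_all_edges_iff)
qed

section \<open>Two pseudo-random properties of G(n,p)\<close>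

definition locally_dense :: "real \<Rightarrow> nat \<Rightarrow> nat set set \<Rightarrow> bool" where
  "locally_dense p n E \<longleftrightarrow> (\<forall>T \<subseteq> {0..<n}. 16 / p * ln (real n) + 1 \<le> real (card T) \<longrightarrow>
      p / 4 * real (card (pairs T)) < real (card (pairs T \<inter> E)))"

definition sparse_set_bound :: "real \<Rightarrow> nat \<Rightarrow> real \<Rightarrow> real" where
  "sparse_set_bound p n \<Delta> = (16 * ln (real n) + 8 * \<Delta>) / p + 1"

lemma ln_of_nat_nonneg: "0 \<le> ln (real n)"
  by (cases n) auto

lemma card_le_sparse_set_bound:
  assumes dense: "locally_dense p n E" and p: "0 < p" and T: "T \<subseteq> {0..<n}" and "0 \<le> \<Delta>"
    and deg: "\<And>v. v \<in> T \<Longrightarrow> real (degree (induced_edges E T) v) \<le> \<Delta>"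
  shows "real (card T) \<le> sparse_set_bound p n \<Delta>"
proof (cases "16 / p * ln (real n) + 1 \<le> real (card T)")
  case False
  moreover have "0 \<le> 8 * \<Delta> / p"
    using assms by simp
  ultimately show ?thesis
    unfolding sparse_set_bound_def by (simp add: add_divide_distrib)
next
  case True
  let ?t = "real (card T)"
  have fin: "finite T"
    using T finite_subset by blast
  have "p / 4 * real (card (pairs T)) < real (card (pairs T \<inter> E))"
    using dense True T unfolding locally_dense_def by blast
  then have "p * (2 * real (card (pairs T))) < 8 * real (card (pairs T \<inter> E))"
    by simp
  then have "?t * (p * (?t - 1)) < 8 * real (card (pairs T \<inter> E))"
    unfolding card_pairs[OF fin] by (simp add: algebra_simps)
  also have "\<dots> \<le> 8 * (\<Sum>v\<in>T. real (degree (induced_edges E T) v))"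
    using card_pairs_Int_le_sum_degree[OF fin, of E] by (simp flip: of_nat_sum)
  also have "\<dots> \<le> ?t * (8 * \<Delta>)"
    using sum_mono[OF deg, of T] by simp
  finally have "p * (?t - 1) < 8 * \<Delta>"
    by (rule mult_left_less_imp_less) simp
  then have "?t < 8 * \<Delta> / p + 1"
    using p by (simp add: field_simps)
  moreover have "0 \<le> 16 * ln (real n) / p"
    using p ln_of_nat_nonneg by simp
  ultimately show ?thesis
    unfolding sparse_set_bound_def by (simp add: add_divide_distrib)
qed

definition many_cross_edges :: "nat \<Rightarrow> real \<Rightarrow> real \<Rightarrow> nat \<Rightarrow> nat set set \<Rightarrow> bool" where
  "many_cross_edges k m d n E \<longleftrightarrow> (\<forall>I Y. I \<subseteq> {0..<n} \<longrightarrow> Y \<subseteq> {0..<n} \<longrightarrow> I \<inter> Y = {} \<longrightarrow>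
      card I = k \<longrightarrow> m \<le> real (card Y) \<longrightarrow> d < real (card (cross I Y \<inter> E)))"

lemma expectation_half_power_Gnp:
  assumes M: "M \<subseteq> all_edges n" and p: "0 \<le> p" "p \<le> 1"
  shows "measure_pmf.expectation (Gnp n p) (\<lambda>E. (1/2::real) ^ card (M \<inter> E)) = (1 - p/2) ^ card M"
proof -
  let ?A = "all_edges n"
  define h where "h = (\<lambda>e (b::bool). if e \<in> M \<and> b then 1/2 else (1::real))"
  have prod_h: "(1/2::real) ^ card (M \<inter> {e \<in> ?A. f e}) = (\<Prod>e\<in>?A. h e (f e))" for f
  proof -
    have "(\<Prod>e\<in>?A. h e (f e))
        = (\<Prod>e\<in>?A \<inter> {e. e \<in> M \<and> f e}. 1/2) * (\<Prod>e\<in>?A \<inter> - {e. e \<in> M \<and> f e}. 1)"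
      unfolding h_def by (rule prod.If_cases) (rule finite_all_edges)
    also have "?A \<inter> {e. e \<in> M \<and> f e} = M \<inter> {e \<in> ?A. f e}"
      using M by auto
    finally show ?thesis
      by simp
  qed
  have "measure_pmf.expectation (Gnp n p) (\<lambda>E. (1/2::real) ^ card (M \<inter> E))
      = measure_pmf.expectation (Pi_pmf ?A False (\<lambda>_. bernoulli_pmf p)) (\<lambda>f. \<Prod>e\<in>?A. h e (f e))"
    unfolding Gnp_def by (simp add: prod_h)
  also have "\<dots> = (\<Prod>e\<in>?A. measure_pmf.expectation (bernoulli_pmf p) (h e))"
    by (rule expectation_prod_Pi_pmf) (auto simp: finite_all_edges h_def integrable_measure_pmf_finite)
  also have "\<dots> = (\<Prod>e\<in>?A. if e \<in> M then 1 - p/2 else 1)"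
    using p by (intro prod.cong) (auto simp: h_def algebra_simps)
  also have "\<dots> = (1 - p/2) ^ card M"
    using M finite_all_edges by (simp add: prod.If_cases Int_absorb1)
  finally show ?thesis .
qed

lemma prob_few_edges_le:
  assumes M: "M \<subseteq> all_edges n" and p: "0 \<le> p" "p \<le> 1" and j: "0 \<le> j"
  shows "measure_pmf.prob (Gnp n p) {E. real (card (M \<inter> E)) \<le> j} \<le> exp (j - p * real (card M) / 2)"
proof -
  have int: "integrable (measure_pmf (Gnp n p)) f" for f :: "_ \<Rightarrow> real"
    by (rule integrable_measure_pmf_finite[OF finite_set_pmf_Gnp])
  \<comment> \<open>Markov's inequality for the random variable 2 powr (j - |M \<inter> E|)\<close>
  have markov: "indicator {E. real (card (M \<inter> E)) \<le> j} E \<le> 2 powr j * (1/2::real) ^ card (M \<inter> E)" for E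
  proof (cases "real (card (M \<inter> E)) \<le> j")
    case True
    have "(2::real) ^ card (M \<inter> E) = 2 powr real (card (M \<inter> E))"
      by (simp add: powr_realpow)
    also have "\<dots> \<le> 2 powr j"
      using True by simp
    finally show ?thesis
      using True by (simp add: field_simps)
  qed simp
  have "measure_pmf.prob (Gnp n p) {E. real (card (M \<inter> E)) \<le> j}
      = measure_pmf.expectation (Gnp n p) (indicator {E. real (card (M \<inter> E)) \<le> j})"
    by simp
  also have "\<dots> \<le> measure_pmf.expectation (Gnp n p) (\<lambda>E. 2 powr j * (1/2::real) ^ card (M \<inter> E))"
    by (rule integral_mono[OF int int markov])
  also have "\<dots> = 2 powr j * (1 - p/2) ^ card M"
    using expectation_half_power_Gnp[OF M p] by simp
  also have "\<dots> \<le> exp j * exp (- (p/2)) ^ card M"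
  proof (rule mult_mono)
    show "2 powr j \<le> exp j"
      using j ln_2_less_1 by (simp add: powr_def mult_left_le)
    show "(1 - p/2) ^ card M \<le> exp (- (p/2)) ^ card M"
      using p exp_ge_add_one_self[of "- (p/2)"] by (intro power_mono) auto
  qed (use p in auto)
  also have "\<dots> = exp (j - p * real (card M) / 2)"
    by (simp add: exp_of_nat_mult[symmetric] exp_add[symmetric] algebra_simps)
  finally show ?thesis .
qed

lemma sum_Pow_power:
  fixes x :: "'a :: comm_semiring_1"
  assumes "finite A"
  shows "(\<Sum>T\<in>Pow A. x ^ card T) = (x + 1) ^ card A"
  using prod_add[OF assms, of "\<lambda>_. x" "\<lambda>_. 1"] by simp

lemma prob_not_locally_dense_le:
  assumes p: "0 < p" "p \<le> 1" and n: "1 \<le> n"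
  shows "measure_pmf.prob (Gnp n p) {E. \<not> locally_dense p n E} \<le> (1 / real n ^ 2 + 1) ^ n - 1"
proof -
  define \<T> where "\<T> = {T \<in> Pow {0..<n}. 16 / p * ln (real n) + 1 \<le> real (card T)}"
  define B where "B T = {E. real (card (pairs T \<inter> E)) \<le> p / 4 * real (card (pairs T))}" for T
  have "{E. \<not> locally_dense p n E} = (\<Union>T\<in>\<T>. B T)"
    unfolding locally_dense_def \<T>_def B_def by (auto simp: not_less)
  then have "measure_pmf.prob (Gnp n p) {E. \<not> locally_dense p n E}
      \<le> (\<Sum>T\<in>\<T>. measure_pmf.prob (Gnp n p) (B T))"
    by (simp only:) (rule measure_UNION_le, auto simp: \<T>_def)
  also have "\<dots> \<le> (\<Sum>T\<in>\<T>. (1 / real n ^ 2) ^ card T)"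
  proof (rule sum_mono)
    fix T assume T: "T \<in> \<T>"
    let ?t = "real (card T)"
    have fin: "finite T"
      using T finite_subset unfolding \<T>_def by auto
    have "16 * ln (real n) \<le> p * (?t - 1)"
      using T p unfolding \<T>_def by (simp add: field_simps)
    then have "16 * ln (real n) * ?t \<le> p * (?t - 1) * ?t"
      by (rule mult_right_mono) simp
    also have "\<dots> = p * (2 * real (card (pairs T)))"
      by (simp only: card_pairs[OF fin]) (simp add: algebra_simps)
    finally have exponent: "p / 4 * real (card (pairs T)) - p * real (card (pairs T)) / 2
        \<le> - (2 * ln (real n) * ?t)"
      by (simp add: field_simps)
    have power: "exp (- (2 * ln (real n) * ?t)) = (1 / real n ^ 2) ^ card T"
    proof -
      have "(1 / real n ^ 2) ^ card T = exp (ln (1 / real n ^ 2)) ^ card T"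
        using n by simp
      also have "\<dots> = exp (?t * ln (1 / real n ^ 2))"
        by (rule exp_of_nat_mult[symmetric])
      also have "ln (1 / real n ^ 2) = - (2 * ln (real n))"
        using n by (simp add: ln_div ln_realpow)
      finally show ?thesis
        by (simp add: mult.commute)
    qed
    have "measure_pmf.prob (Gnp n p) (B T)
        \<le> exp (p / 4 * real (card (pairs T)) - p * real (card (pairs T)) / 2)"
      unfolding B_def using T p
      by (intro prob_few_edges_le pairs_subset_all_edges) (auto simp: \<T>_def)
    also have "\<dots> \<le> (1 / real n ^ 2) ^ card T"
      using exponent power by (metis exp_le_cancel_iff)
    finally show "measure_pmf.prob (Gnp n p) (B T) \<le> (1 / real n ^ 2) ^ card T" .
  qed
  also have "\<dots> \<le> (\<Sum>T\<in>Pow {0..<n} - {{}}. (1 / real n ^ 2) ^ card T)"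
  proof (rule sum_mono2)
    have "0 \<le> 16 / p * ln (real n)"
      using p ln_of_nat_nonneg[of n] by simp
    then show "\<T> \<subseteq> Pow {0..<n} - {{}}"
      unfolding \<T>_def by auto
  qed auto
  also have "\<dots> = (\<Sum>T\<in>Pow {0..<n}. (1 / real n ^ 2) ^ card T) - 1"
    by (subst sum_diff) auto
  also have "\<dots> = (1 / real n ^ 2 + 1) ^ n - 1"
    by (subst sum_Pow_power) auto
  finally show ?thesis .
qed

lemma prob_not_many_cross_edges_le:
  assumes p: "0 \<le> p" "p \<le> 1" and d: "0 \<le> d"
  shows "measure_pmf.prob (Gnp n p) {E. \<not> many_cross_edges k m d n E}
    \<le> 4 ^ n * exp (d - p * real k * m / 2)"
proof -
  define \<P> where
    "\<P> = {(I, Y) \<in> Pow {0..<n} \<times> Pow {0..<n}. I \<inter> Y = {} \<and> card I = k \<and> m \<le> real (card Y)}"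
  define B where "B = (\<lambda>(I, Y). {E. real (card (cross I Y \<inter> E)) \<le> d})"
  have fin: "finite \<P>"
    unfolding \<P>_def by (rule finite_subset[of _ "Pow {0..<n} \<times> Pow {0..<n}"]) auto
  have "{E. \<not> many_cross_edges k m d n E} = (\<Union>IY\<in>\<P>. B IY)"
    unfolding many_cross_edges_def \<P>_def B_def by (auto simp: not_less)
  then have "measure_pmf.prob (Gnp n p) {E. \<not> many_cross_edges k m d n E}
      \<le> (\<Sum>IY\<in>\<P>. measure_pmf.prob (Gnp n p) (B IY))"
    by (simp only:) (rule measure_UNION_le[OF fin], auto)
  also have "\<dots> \<le> (\<Sum>IY\<in>\<P>. exp (d - p * real k * m / 2))"
  proof (rule sum_mono)
    fix IY assume "IY \<in> \<P>"
    then obtain I Y where IY: "IY = (I, Y)" "I \<subseteq> {0..<n}" "Y \<subseteq> {0..<n}" "I \<inter> Y = {}"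
      "card I = k" "m \<le> real (card Y)"
      unfolding \<P>_def by auto
    have "finite I" "finite Y"
      using IY(2,3) finite_subset by auto
    then have card: "real (card (cross I Y)) = real k * real (card Y)"
      using card_cross[OF IY(4)] IY(5) by simp
    have "measure_pmf.prob (Gnp n p) (B IY) \<le> exp (d - p * real (card (cross I Y)) / 2)"
      unfolding B_def IY(1) using IY p d
      by (simp only: prod.case) (intro prob_few_edges_le cross_subset_all_edges)
    also have "\<dots> \<le> exp (d - p * real k * m / 2)"
      using mult_left_mono[OF IY(6), of "p * real k"] p unfolding card by simp
    finally show "measure_pmf.prob (Gnp n p) (B IY) \<le> exp (d - p * real k * m / 2)" .
  qed
  also have "\<dots> \<le> 4 ^ n * exp (d - p * real k * m / 2)"
  proof -
    have "card \<P> \<le> card (Pow {0..<n} \<times> Pow {0..<n})"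
      by (rule card_mono) (auto simp: \<P>_def)
    also have "\<dots> = 4 ^ n"
      by (simp add: card_cartesian_product card_Pow flip: power_mult_distrib)
    finally have "real (card \<P>) \<le> 4 ^ n"
      by (metis of_nat_le_iff of_nat_numeral of_nat_power)
    then show ?thesis
      by (simp add: mult_right_mono)
  qed
  finally show ?thesis .
qed

lemma whp_if_eventually_implied:
  assumes implied: "\<forall>\<^sub>F n in sequentially. \<forall>E \<in> set_pmf (Gnp n p). A n E \<longrightarrow> B n E \<longrightarrow> Q n E"
    and A: "(\<lambda>n. measure_pmf.prob (Gnp n p) {E. \<not> A n E}) \<longlonglongrightarrow> 0"
    and B: "(\<lambda>n. measure_pmf.prob (Gnp n p) {E. \<not> B n E}) \<longlonglongrightarrow> 0"
  shows "whp p Q"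
proof -
  let ?fail = "\<lambda>n. measure_pmf.prob (Gnp n p) {E. \<not> A n E} + measure_pmf.prob (Gnp n p) {E. \<not> B n E}"
  have lower: "\<forall>\<^sub>F n in sequentially. 1 - ?fail n \<le> measure_pmf.prob (Gnp n p) {E. Q n E}"
    using implied
  proof eventually_elim
    case (elim n)
    let ?M = "Gnp n p"
    have "measure_pmf.prob ?M {E. \<not> Q n E} \<le> measure_pmf.prob ?M ({E. \<not> A n E} \<union> {E. \<not> B n E})"
      using elim by (intro measure_pmf.finite_measure_mono_AE AE_pmfI) auto
    also have "\<dots> \<le> ?fail n"
      by (rule measure_Un_le) auto
    finally show ?case
      using measure_pmf.prob_compl[of "{E. Q n E}" ?M] by (simp add: Compl_eq_Diff_UNIV set_diff_eq)
  qed
  have upper: "\<forall>\<^sub>F n in sequentially. measure_pmf.prob (Gnp n p) {E. Q n E} \<le> 1"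
    by simp
  have "(\<lambda>n. 1 - ?fail n) \<longlonglongrightarrow> 1"
    using tendsto_diff[OF tendsto_const tendsto_add[OF A B], of 1] by simp
  then have "(\<lambda>n. measure_pmf.prob (Gnp n p) {E. Q n E}) \<longlonglongrightarrow> 1"
    by (rule tendsto_sandwich[OF lower upper _ tendsto_const])
  then show ?thesis
    unfolding whp_def .
qed

lemma prob_not_locally_dense_tendsto_0:
  assumes "0 < p" "p \<le> 1"
  shows "(\<lambda>n. measure_pmf.prob (Gnp n p) {E. \<not> locally_dense p n E}) \<longlonglongrightarrow> 0"
proof (rule tendsto_sandwich[of "\<lambda>_. 0" _ _ "\<lambda>n. exp (1 / real n) - 1"])
  show "\<forall>\<^sub>F n in sequentially.
      measure_pmf.prob (Gnp n p) {E. \<not> locally_dense p n E} \<le> exp (1 / real n) - 1"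
    using eventually_ge_at_top[of 1]
  proof eventually_elim
    case (elim n)
    have "(1 / real n ^ 2 + 1) ^ n \<le> exp (1 / real n ^ 2) ^ n"
      using exp_ge_add_one_self[of "1 / real n ^ 2"] by (intro power_mono) (auto simp: add.commute)
    also have "\<dots> = exp (1 / real n)"
      using elim by (simp flip: exp_of_nat_mult add: power2_eq_square)
    finally show ?case
      using prob_not_locally_dense_le[OF assms elim] by simp
  qed
  show "(\<lambda>n. exp (1 / real n) - 1) \<longlonglongrightarrow> 0"
    by real_asymp
qed auto

lemma prob_not_many_cross_edges_tendsto_0:
  assumes "0 < p" "p \<le> 1" "0 \<le> c" "0 < \<epsilon>"
  shows "(\<lambda>n. measure_pmf.prob (Gnp n p)
    {E. \<not> many_cross_edges (nat \<lfloor>3 / p * ln (real n)\<rfloor> + 1) (\<epsilon> * real n / 2) (c * real n) n E}) \<longlonglongrightarrow> 0"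
proof (rule tendsto_sandwich[of "\<lambda>_. 0" _ _
      "\<lambda>n. exp (real n * ln 4 + (c * real n - 3 / 4 * \<epsilon> * real n * ln (real n)))"])
  show "\<forall>\<^sub>F n in sequentially. measure_pmf.prob (Gnp n p)
      {E. \<not> many_cross_edges (nat \<lfloor>3 / p * ln (real n)\<rfloor> + 1) (\<epsilon> * real n / 2) (c * real n) n E}
    \<le> exp (real n * ln 4 + (c * real n - 3 / 4 * \<epsilon> * real n * ln (real n)))"
  proof (rule always_eventually, rule allI)
    fix n
    let ?k = "nat \<lfloor>3 / p * ln (real n)\<rfloor> + 1"
    have "3 / p * ln (real n) \<le> real ?k"
      using assms ln_of_nat_nonneg[of n] by linarith
    then have "3 * ln (real n) \<le> p * real ?k"
      using assms by (simp add: field_simps)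
    then have "3 * ln (real n) * (\<epsilon> * real n / 2) \<le> p * real ?k * (\<epsilon> * real n / 2)"
      using assms by (intro mult_right_mono) auto
    then have exponent: "c * real n - p * real ?k * (\<epsilon> * real n / 2) / 2
        \<le> c * real n - 3 / 4 * \<epsilon> * real n * ln (real n)"
      by (simp add: field_simps)
    have "measure_pmf.prob (Gnp n p)
        {E. \<not> many_cross_edges ?k (\<epsilon> * real n / 2) (c * real n) n E}
      \<le> 4 ^ n * exp (c * real n - p * real ?k * (\<epsilon> * real n / 2) / 2)"
      using assms by (intro prob_not_many_cross_edges_le) auto
    also have "\<dots> \<le> 4 ^ n * exp (c * real n - 3 / 4 * \<epsilon> * real n * ln (real n))"
      using exponent by simp
    also have "\<dots> = exp (real n * ln 4) * exp (c * real n - 3 / 4 * \<epsilon> * real n * ln (real n))"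
      by (simp add: exp_of_nat_mult)
    also have "\<dots> = exp (real n * ln 4 + (c * real n - 3 / 4 * \<epsilon> * real n * ln (real n)))"
      by (rule exp_add[symmetric])
    finally show "measure_pmf.prob (Gnp n p)
        {E. \<not> many_cross_edges ?k (\<epsilon> * real n / 2) (c * real n) n E}
      \<le> exp (real n * ln 4 + (c * real n - 3 / 4 * \<epsilon> * real n * ln (real n)))" .
  qed
  show "(\<lambda>n. exp (real n * ln 4 + (c * real n - 3 / 4 * \<epsilon> * real n * ln (real n)))) \<longlonglongrightarrow> 0"
    using assms by real_asymp
qed auto

section \<open>Isolated vertices and leaves of a C4-saturated subgraph\<close>

locale C4_saturated_subgraph =
  fixes n :: nat and E :: "nat set set" and S :: "nat set" and H F :: "nat set set"
  assumes E_subset: "E \<subseteq> all_edges n"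
    and S_subset: "S \<subseteq> {0..<n}"
    and H_subset: "H \<subseteq> induced_edges E S"
    and saturated: "C4_saturated_in F H"
begin

definition removed :: "nat set set" where
  "removed = induced_edges E S - H"

lemma finite_S: "finite S"
  using S_subset finite_subset by blast

lemma F_subset: "F \<subseteq> induced_edges E S"
  using saturated H_subset unfolding C4_saturated_in_def by blast

lemma F_subset_all_edges: "F \<subseteq> all_edges n"
  using F_subset E_subset unfolding induced_edges_def by blast

lemma finite_F: "finite F"
  by (rule finite_subset[OF F_subset_all_edges finite_all_edges])

lemma finite_removed: "finite removed"
proof -
  have "removed \<subseteq> all_edges n"
    using E_subset unfolding removed_def induced_edges_def by blast
  then show ?thesis
    by (rule finite_subset) (rule finite_all_edges)
qed

lemma no_loop: "{v, v} \<notin> F"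
  using F_subset_all_edges doubleton_in_all_edges_iff[of v v n] by auto

lemma F_edge_in_S: "{v, u} \<in> F \<Longrightarrow> u \<in> S"
  using F_subset unfolding induced_edges_def by auto

lemma E_edge_cases:
  assumes "v \<in> S" "u \<in> S" "{v, u} \<in> E"
  shows "{v, u} \<in> removed \<or> {v, u} \<in> F \<or>
    (\<exists>y x. {v, y} \<in> F \<and> {y, x} \<in> F \<and> {x, u} \<in> F \<and> distinct [v, u, x, y])"
proof (cases "{v, u} \<in> H")
  case False
  with assms show ?thesis
    unfolding removed_def induced_edges_def by auto
next
  case True
  then have "{v, u} \<in> F \<or> has_C4 (insert {v, u} F)"
    using saturated unfolding C4_saturated_in_def by blast
  moreover have "\<not> has_C4 F"
    using saturated unfolding C4_saturated_in_def by blast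
  ultimately show ?thesis
    using C4_of_insert by blast
qed

lemma removed_at_isolated:
  assumes "v \<in> S" "degree F v = 0" "u \<in> S" "{v, u} \<in> E"
  shows "{v, u} \<in> removed"
proof -
  have "{u. {v, u} \<in> F} = {}"
    using assms(2) finite_neighbours[OF finite_F] unfolding degree_def by simp
  then show ?thesis
    using E_edge_cases[OF assms(1,3,4)] by blast
qed

lemma card_isolated_less:
  assumes cross: "many_cross_edges k m d n E" and "real (card removed) \<le> d"
    and "real k + m \<le> real (card S)"
  shows "card {v \<in> S. degree F v = 0} < k"
proof (rule ccontr)
  assume "\<not> ?thesis"
  then obtain I where I: "I \<subseteq> {v \<in> S. degree F v = 0}" "card I = k"
    by (meson not_less obtain_subset_with_card_n)
  define Y where "Y = S - I"
  have "I \<subseteq> S"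
    using I(1) by auto
  then have "finite I"
    using finite_S by (rule finite_subset)
  moreover have "k \<le> card S"
    using card_mono[OF finite_S \<open>I \<subseteq> S\<close>] I(2) by simp
  ultimately have "real (card Y) = real (card S) - real k"
    unfolding Y_def using I(2) \<open>I \<subseteq> S\<close> by (simp add: card_Diff_subset)
  then have "m \<le> real (card Y)"
    using assms(3) by simp
  moreover have "I \<subseteq> {0..<n}" "Y \<subseteq> {0..<n}" "I \<inter> Y = {}"
    using \<open>I \<subseteq> S\<close> S_subset unfolding Y_def by auto
  ultimately have "d < real (card (cross I Y \<inter> E))"
    using cross I(2) unfolding many_cross_edges_def by blast
  moreover have "cross I Y \<inter> E \<subseteq> removed"
    using I(1) removed_at_isolated unfolding cross_def Y_def by blast
  then have "card (cross I Y \<inter> E) \<le> card removed"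
    using finite_removed by (rule card_mono[rotated])
  ultimately show False
    using assms(2) by linarith
qed

definition leaves :: "nat set" where
  "leaves = {v \<in> S. degree F v = 1}"

definition stem :: "nat \<Rightarrow> nat" where
  "stem v = (THE w. {v, w} \<in> F)"

lemma neighbours_leaf:
  assumes "v \<in> leaves"
  shows "{u. {v, u} \<in> F} = {stem v}"
proof -
  have "card {u. {v, u} \<in> F} = 1"
    using assms unfolding leaves_def degree_def by simp
  then obtain w where w: "{u. {v, u} \<in> F} = {w}"
    by (rule card_1_singletonE)
  then have "stem v = w"
    unfolding stem_def by (rule_tac the_equality) auto
  with w show ?thesis
    by simp
qed

lemma stem_edge: "v \<in> leaves \<Longrightarrow> {v, stem v} \<in> F"
  using neighbours_leaf by blast

lemma E_edge_at_leaf_cases: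
  assumes "v \<in> leaves" "u \<in> S" "{v, u} \<in> E"
  shows "{v, u} \<in> removed \<or> u = stem v \<or> (\<exists>x. {u, x} \<in> F \<and> {x, stem v} \<in> F)"
proof -
  have nbrs: "{u. {v, u} \<in> F} = {stem v}"
    using assms(1) by (rule neighbours_leaf)
  have "v \<in> S"
    using assms(1) unfolding leaves_def by simp
  from E_edge_cases[OF this assms(2,3)] show ?thesis
  proof (elim disjE exE conjE)
    assume "{v, u} \<in> F"
    then show ?thesis
      using nbrs by blast
  next
    fix y x assume "{v, y} \<in> F" "{y, x} \<in> F" "{x, u} \<in> F" "distinct [v, u, x, y]"
    moreover from \<open>{v, y} \<in> F\<close> have "y = stem v"
      using nbrs by blast
    ultimately show ?thesis
      by (metis insert_commute)
  qed simp
qed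

definition heavy_leaves :: "real \<Rightarrow> nat set" where
  "heavy_leaves L = {v \<in> leaves. L < real (degree removed v)}"

definition light_leaves_at :: "real \<Rightarrow> nat \<Rightarrow> nat set" where
  "light_leaves_at L w = {v \<in> leaves - heavy_leaves L. stem v = w}"

lemma card_heavy_leaves_le:
  assumes "0 < L"
  shows "real (card (heavy_leaves L)) \<le> 2 * real (card removed) / L"
proof -
  have "finite leaves"
    using finite_S unfolding leaves_def by simp
  with card_degree_gt_le[OF finite_removed _ less_imp_le[OF assms]]
  show ?thesis
    using assms unfolding heavy_leaves_def by (simp add: field_simps)
qed

lemma degree_light_leaves_at_le:
  assumes v: "v \<in> light_leaves_at L w"
  shows "real (degree (induced_edges E (light_leaves_at L w)) v) \<le> L"
proof -
  have "{u. {v, u} \<in> induced_edges E (light_leaves_at L w)} \<subseteq> {u. {v, u} \<in> removed}"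
  proof
    fix u assume "u \<in> {u. {v, u} \<in> induced_edges E (light_leaves_at L w)}"
    then have u: "u \<in> light_leaves_at L w" and "{v, u} \<in> E"
      unfolding induced_edges_def by auto
    have leaves: "v \<in> leaves" "u \<in> leaves" and same_stem: "stem u = stem v"
      using v u unfolding light_leaves_at_def by auto
    then have "u \<in> S"
      unfolding leaves_def by simp
    \<comment> \<open>unless vu was removed, the common stem forces a loop in F\<close>
    from E_edge_at_leaf_cases[OF leaves(1) this \<open>{v, u} \<in> E\<close>]
    consider "{v, u} \<in> removed" | "u = stem v" | x where "{u, x} \<in> F" "{x, stem v} \<in> F"
      by blast
    then show "u \<in> {u. {v, u} \<in> removed}"
    proof cases
      case 2
      then have "{u, u} \<in> F"
        using stem_edge[OF leaves(2)] same_stem by simp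
      then show ?thesis
        using no_loop by blast
    next
      case (3 x)
      then have "x = stem v"
        using neighbours_leaf[OF leaves(2)] same_stem by auto
      then show ?thesis
        using 3(2) no_loop by simp
    qed simp
  qed
  then have "degree (induced_edges E (light_leaves_at L w)) v \<le> degree removed v"
    unfolding degree_def by (rule card_mono[OF finite_neighbours[OF finite_removed]])
  moreover have "real (degree removed v) \<le> L"
    using v unfolding light_leaves_at_def heavy_leaves_def by auto
  ultimately show ?thesis
    by linarith
qed

lemma card_light_leaves_at_le:
  assumes "locally_dense p n E" "0 < p" "0 \<le> L"
  shows "real (card (light_leaves_at L w)) \<le> sparse_set_bound p n L"
proof (rule card_le_sparse_set_bound[OF assms(1,2) _ assms(3)])
  show "light_leaves_at L w \<subseteq> {0..<n}"
    using S_subset unfolding light_leaves_at_def leaves_def by auto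
qed (rule degree_light_leaves_at_le)

lemma card_leaves_at_high_stems_le:
  assumes "locally_dense p n E" "0 < p" "0 \<le> L"
  shows "real (card {v \<in> leaves - heavy_leaves L. sqrt (card F) < real (degree F (stem v))})
    \<le> 2 * sqrt (card F) * sparse_set_bound p n L"
proof -
  let ?s = "sqrt (real (card F))"
  define hubs where "hubs = {w \<in> S. ?s < real (degree F w)}"
  have fin_hubs: "finite hubs"
    using finite_S unfolding hubs_def by simp
  have card_hubs: "real (card hubs) \<le> 2 * ?s"
  proof (cases "card F = 0")
    case True
    then have "hubs = {}"
      using finite_F unfolding hubs_def degree_def by simp
    then show ?thesis
      by simp
  next
    case False
    have "real (card hubs) * ?s \<le> 2 * real (card F)"
      using card_degree_gt_le[OF finite_F finite_S, of ?s] unfolding hubs_def by simp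
    also have "\<dots> = (2 * ?s) * ?s"
      by simp
    finally show ?thesis
      by (rule mult_right_le_imp_le) (use False in simp)
  qed
  have "{v \<in> leaves - heavy_leaves L. ?s < real (degree F (stem v))} \<subseteq> (\<Union>w\<in>hubs. light_leaves_at L w)"
    unfolding hubs_def light_leaves_at_def using F_edge_in_S stem_edge by blast
  then have "card {v \<in> leaves - heavy_leaves L. ?s < real (degree F (stem v))}
      \<le> card (\<Union>w\<in>hubs. light_leaves_at L w)"
    using fin_hubs finite_S
    by (intro card_mono) (auto simp: light_leaves_at_def leaves_def)
  also have "\<dots> \<le> (\<Sum>w\<in>hubs. card (light_leaves_at L w))"
    by (rule card_UN_le[OF fin_hubs])
  finally have "real (card {v \<in> leaves - heavy_leaves L. ?s < real (degree F (stem v))})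
      \<le> (\<Sum>w\<in>hubs. real (card (light_leaves_at L w)))"
    by (simp flip: of_nat_sum)
  also have "\<dots> \<le> real (card hubs) * sparse_set_bound p n L"
    using sum_mono[OF card_light_leaves_at_le[OF assms]] by simp
  also have "\<dots> \<le> 2 * ?s * sparse_set_bound p n L"
    using card_hubs assms by (simp add: mult_right_mono sparse_set_bound_def ln_of_nat_nonneg)
  finally show ?thesis .
qed

lemma neighbours_of_leaf_subset:
  assumes v: "v \<in> leaves" and D: "D \<subseteq> leaves - heavy_leaves L"
  shows "{u. {v, u} \<in> induced_edges E D}
    \<subseteq> {u. {v, u} \<in> removed} \<union> {stem v} \<union> (\<Union>x \<in> {x. {stem v, x} \<in> F}. light_leaves_at L x)"
proof
  fix u assume "u \<in> {u. {v, u} \<in> induced_edges E D}"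
  then have u: "u \<in> leaves - heavy_leaves L" "{v, u} \<in> E"
    using D unfolding induced_edges_def by auto
  then consider "{v, u} \<in> removed" | "u = stem v" | x where "{u, x} \<in> F" "{x, stem v} \<in> F"
    using E_edge_at_leaf_cases[OF v] unfolding leaves_def by blast
  then show "u \<in> {u. {v, u} \<in> removed} \<union> {stem v}
      \<union> (\<Union>x \<in> {x. {stem v, x} \<in> F}. light_leaves_at L x)"
  proof cases
    case (3 x)
    then have "x = stem u"
      using neighbours_leaf[of u] u(1) by auto
    with u(1) 3(2) show ?thesis
      unfolding light_leaves_at_def by (auto simp: insert_commute)
  qed auto
qed

lemma degree_light_leaves_le:
  assumes "locally_dense p n E" "0 < p" "0 \<le> L"
    and D: "D \<subseteq> leaves - heavy_leaves L" and v: "v \<in> D"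
  shows "real (degree (induced_edges E D) v)
    \<le> L + 1 + real (degree F (stem v)) * sparse_set_bound p n L"
proof -
  let ?N = "{x. {stem v, x} \<in> F}"
  have fin_N: "finite ?N"
    by (rule finite_neighbours[OF finite_F])
  have "degree (induced_edges E D) v
      \<le> card ({u. {v, u} \<in> removed} \<union> {stem v} \<union> (\<Union>x\<in>?N. light_leaves_at L x))"
    unfolding degree_def using neighbours_of_leaf_subset[of v D L] D v
      fin_N finite_neighbours[OF finite_removed] finite_S
    by (intro card_mono) (auto simp: light_leaves_at_def leaves_def)
  also have "\<dots> \<le> card {u. {v, u} \<in> removed} + card {stem v} + card (\<Union>x\<in>?N. light_leaves_at L x)"
    by (meson add_mono card_Un_le order_trans le_refl)
  also have "\<dots> \<le> degree removed v + 1 + (\<Sum>x\<in>?N. card (light_leaves_at L x))"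
    using card_UN_le[OF fin_N] unfolding degree_def by simp
  finally have "real (degree (induced_edges E D) v)
      \<le> real (degree removed v) + 1 + (\<Sum>x\<in>?N. real (card (light_leaves_at L x)))"
    by (simp flip: of_nat_sum)
  also have "\<dots> \<le> L + 1 + (\<Sum>x\<in>?N. sparse_set_bound p n L)"
    using D v card_light_leaves_at_le[OF assms(1-3)] unfolding heavy_leaves_def
    by (intro add_mono sum_mono) auto
  finally show ?thesis
    by (simp add: degree_def)
qed

lemma card_leaves_at_low_stems_le:
  assumes "locally_dense p n E" "0 < p" "0 \<le> L"
  shows "real (card {v \<in> leaves - heavy_leaves L. real (degree F (stem v)) \<le> sqrt (card F)})
    \<le> sparse_set_bound p n (L + 1 + sqrt (card F) * sparse_set_bound p n L)"
proof (rule card_le_sparse_set_bound[OF assms(1,2)])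
  let ?s = "sqrt (real (card F))" and ?B = "sparse_set_bound p n L"
  let ?D = "{v \<in> leaves - heavy_leaves L. real (degree F (stem v)) \<le> ?s}"
  have B: "0 \<le> ?B"
    using assms by (simp add: sparse_set_bound_def ln_of_nat_nonneg)
  show "?D \<subseteq> {0..<n}"
    using S_subset unfolding leaves_def by auto
  show "0 \<le> L + 1 + ?s * ?B"
    using assms(3) B by simp
  fix v assume v: "v \<in> ?D"
  then have "real (degree (induced_edges E ?D) v) \<le> L + 1 + real (degree F (stem v)) * ?B"
    by (intro degree_light_leaves_le[OF assms]) auto
  also have "\<dots> \<le> L + 1 + ?s * ?B"
    using v B by (simp add: mult_right_mono)
  finally show "real (degree (induced_edges E ?D) v) \<le> L + 1 + ?s * ?B" .
qed

lemma card_leaves_le: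
  assumes "locally_dense p n E" "0 < p" "0 < L"
  shows "real (card leaves) \<le> 2 * real (card removed) / L
    + 2 * sqrt (card F) * sparse_set_bound p n L
    + sparse_set_bound p n (L + 1 + sqrt (card F) * sparse_set_bound p n L)"
proof -
  let ?s = "sqrt (real (card F))"
  have "leaves \<subseteq> heavy_leaves L
      \<union> {v \<in> leaves - heavy_leaves L. ?s < real (degree F (stem v))}
      \<union> {v \<in> leaves - heavy_leaves L. real (degree F (stem v)) \<le> ?s}"
    by auto
  moreover have "finite leaves"
    using finite_S unfolding leaves_def by simp
  ultimately have "card leaves \<le> card (heavy_leaves L
      \<union> {v \<in> leaves - heavy_leaves L. ?s < real (degree F (stem v))}
      \<union> {v \<in> leaves - heavy_leaves L. real (degree F (stem v)) \<le> ?s})"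
    by (intro card_mono) (auto simp: heavy_leaves_def)
  also have "\<dots> \<le> card (heavy_leaves L)
      + card {v \<in> leaves - heavy_leaves L. ?s < real (degree F (stem v))}
      + card {v \<in> leaves - heavy_leaves L. real (degree F (stem v)) \<le> ?s}"
    by (meson add_mono card_Un_le order_trans le_refl)
  finally have "real (card leaves) \<le> real (card (heavy_leaves L))
      + real (card {v \<in> leaves - heavy_leaves L. ?s < real (degree F (stem v))})
      + real (card {v \<in> leaves - heavy_leaves L. real (degree F (stem v)) \<le> ?s})"
    by linarith
  moreover have "0 \<le> L"
    using assms(3) by simp
  ultimately show ?thesis
    using card_heavy_leaves_le[OF assms(3)] card_leaves_at_high_stems_le[OF assms(1,2)]
      card_leaves_at_low_stems_le[OF assms(1,2)] by fastforce
qed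

end

lemma leaf_bound_arith:
  fixes L q s r x c :: real
  assumes L: "1 \<le> L" "L * L \<le> 4 * x" and q: "1 \<le> q" and s: "0 \<le> s"
    and c: "0 \<le> c" and r: "r \<le> c * x"
  shows "2 * r / L + 2 * s * ((16 * L + 8 * L) * q + 1)
    + ((16 * L + 8 * (L + 1 + s * ((16 * L + 8 * L) * q + 1))) * q + 1)
    \<le> (2 * c + 250 * q\<^sup>2) * (s * L + x / L)"
proof -
  define B where "B = (16 * L + 8 * L) * q + 1"
  have qL: "1 \<le> q * L" "q \<le> q * L"
    using L q mult_mono[of 1 q 1 L] by auto
  have "0 \<le> x"
    using L mult_nonneg_nonneg[of L L] by linarith
  then have "L \<le> 4 * (x / L)" and x: "0 \<le> x / L"
    using L by (auto simp: field_simps)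
  have B: "0 \<le> B" "B \<le> 25 * (q * L)"
    using q qL unfolding B_def by (simp_all add: algebra_simps)
  have "(2 + 8 * q) * (s * B) \<le> (10 * q) * (s * (25 * (q * L)))"
    using q B s by (intro mult_mono mult_left_mono) auto
  also have "\<dots> = 250 * (q\<^sup>2 * (s * L))"
    by (simp add: power2_eq_square algebra_simps)
  finally have stems: "(2 + 8 * q) * (s * B) \<le> 250 * (q\<^sup>2 * (s * L))" .
  have "24 * L * q + 8 * q + 1 \<le> 33 * (q * L)"
    using qL by (simp add: algebra_simps)
  also have "\<dots> \<le> 33 * (q * (q * L))"
    using mult_right_mono[OF q, of "q * L"] qL(1) by simp
  also have "\<dots> \<le> 132 * (q\<^sup>2 * (x / L))"
    using mult_left_mono[OF \<open>L \<le> 4 * (x / L)\<close>, of "33 * q\<^sup>2"] by (simp add: power2_eq_square algebra_simps)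
  finally have rest: "24 * L * q + 8 * q + 1 \<le> 132 * (q\<^sup>2 * (x / L))" .
  have r_bound: "2 * r / L \<le> 2 * (c * (x / L))"
    using r L by (simp add: divide_right_mono)
  have "0 \<le> c * (s * L)"
    using c s L by simp
  moreover have "0 \<le> q\<^sup>2 * (x / L)"
    by (rule mult_nonneg_nonneg[OF zero_le_power2 x])
  moreover have "2 * r / L + 2 * s * B + ((16 * L + 8 * (L + 1 + s * B)) * q + 1)
      = 2 * r / L + (2 + 8 * q) * (s * B) + (24 * L * q + 8 * q + 1)"
    by (simp add: algebra_simps)
  moreover have "(2 * c + 250 * q\<^sup>2) * (s * L + x / L)
      = 2 * (c * (s * L)) + 2 * (c * (x / L)) + 250 * (q\<^sup>2 * (s * L)) + 250 * (q\<^sup>2 * (x / L))"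
    by (simp add: algebra_simps)
  ultimately show ?thesis
    using stems rest r_bound unfolding B_def[symmetric] by linarith
qed

lemma C4_saturated_degree_bounds:
  fixes p c \<epsilon> :: real
  assumes p: "0 < p" "p \<le> 1" and c: "0 \<le> c"
    and n: "3 / p * ln (real n) + 1 \<le> \<epsilon> * real n / 2" "1 \<le> ln (real n)"
      "ln (real n) * ln (real n) \<le> 4 * real n"
    and E: "E \<in> set_pmf (Gnp n p)" and dense: "locally_dense p n E"
    and cross: "many_cross_edges (nat \<lfloor>3 / p * ln (real n)\<rfloor> + 1) (\<epsilon> * real n / 2) (c * real n) n E"
  shows "\<forall>S \<subseteq> {0..<n}. real (card S) \<ge> \<epsilon> * real n \<longrightarrow>
      (\<forall>F Ht. F \<subseteq> Ht \<and> Ht \<subseteq> induced_edges E S \<and>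
              real (card (induced_edges E S - Ht)) \<le> c * real n \<and>
              C4_saturated_in F Ht \<longrightarrow>
        real (card {v \<in> S. degree F v = 0}) \<le> of_int \<lfloor>3 / p * ln (real n)\<rfloor> \<and>
        real (card {v \<in> S. degree F v = 1})
          \<le> (2 * c + 250 / p\<^sup>2) * (sqrt (real (card F)) * ln (real n) + real n / ln (real n)))"
proof (intro allI impI conjI; elim conjE)
  fix S F H
  assume S: "S \<subseteq> {0..<n}" "\<epsilon> * real n \<le> real (card S)"
    and "F \<subseteq> H" and H: "H \<subseteq> induced_edges E S"
    and removed: "real (card (induced_edges E S - H)) \<le> c * real n" and sat: "C4_saturated_in F H"
  interpret C4_saturated_subgraph n E S H F
    using set_pmf_Gnp E S(1) H sat by unfold_locales auto
  let ?k = "nat \<lfloor>3 / p * ln (real n)\<rfloor> + 1"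
  show "real (card {v \<in> S. degree F v = 0}) \<le> of_int \<lfloor>3 / p * ln (real n)\<rfloor>"
  proof -
    have fl: "0 \<le> \<lfloor>3 / p * ln (real n)\<rfloor>"
      using p n(2) by simp
    have "real ?k \<le> 3 / p * ln (real n) + 1"
      using fl by linarith
    then have "real ?k + \<epsilon> * real n / 2 \<le> real (card S)"
      using n(1) S(2) by linarith
    then have "card {v \<in> S. degree F v = 0} < ?k"
      using card_isolated_less[OF cross] removed unfolding removed_def by blast
    then show ?thesis
      using fl by linarith
  qed
  show "real (card {v \<in> S. degree F v = 1})
      \<le> (2 * c + 250 / p\<^sup>2) * (sqrt (real (card F)) * ln (real n) + real n / ln (real n))"
  proof -
    let ?s = "sqrt (real (card F))" and ?l = "ln (real n)"
    have bound: "sparse_set_bound p n \<Delta> = (16 * ?l + 8 * \<Delta>) * (1 / p) + 1" for \<Delta>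
      by (simp add: sparse_set_bound_def)
    have "real (card {v \<in> S. degree F v = 1}) \<le> 2 * real (card removed) / ?l
        + 2 * ?s * ((16 * ?l + 8 * ?l) * (1 / p) + 1)
        + ((16 * ?l + 8 * (?l + 1 + ?s * ((16 * ?l + 8 * ?l) * (1 / p) + 1))) * (1 / p) + 1)"
      using card_leaves_le[OF dense p(1), of ?l] n(2) unfolding leaves_def bound by simp
    also have "\<dots> \<le> (2 * c + 250 * (1 / p)\<^sup>2) * (?s * ?l + real n / ?l)"
      using removed p n(2,3) c unfolding removed_def by (intro leaf_bound_arith) auto
    finally show ?thesis
      by (simp add: power_one_over)
  qed
qed

theorem lemma11:
  fixes p c \<epsilon> :: real
  assumes "0 < p" "p < 1" "c > 0" "\<epsilon> > 0"
  shows "\<exists>K > 0. whp p (\<lambda>n E.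
    \<forall>S \<subseteq> {0..<n}. real (card S) \<ge> \<epsilon> * real n \<longrightarrow>
      (\<forall>F Ht. F \<subseteq> Ht \<and> Ht \<subseteq> induced_edges E S \<and>
              real (card (induced_edges E S - Ht)) \<le> c * real n \<and>
              C4_saturated_in F Ht \<longrightarrow>
        real (card {v \<in> S. degree F v = 0}) \<le> of_int \<lfloor>3 / p * ln (real n)\<rfloor> \<and>
        real (card {v \<in> S. degree F v = 1})
          \<le> K * (sqrt (real (card F)) * ln (real n) + real n / ln (real n))))"
proof -
  let "\<exists>K>0. whp p (?degree_bounds K)" = ?thesis
  let ?K = "2 * c + 250 / p\<^sup>2"
  have "\<forall>\<^sub>F n in sequentially. 3 / p * ln (real n) + 1 \<le> \<epsilon> * real n / 2"
    "\<forall>\<^sub>F n in sequentially. 1 \<le> ln (real n)"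
    "\<forall>\<^sub>F n in sequentially. ln (real n) * ln (real n) \<le> 4 * real n"
    using assms by real_asymp+
  then have eventually_bounds: "\<forall>\<^sub>F n in sequentially. \<forall>E \<in> set_pmf (Gnp n p).
      locally_dense p n E \<longrightarrow>
      many_cross_edges (nat \<lfloor>3 / p * ln (real n)\<rfloor> + 1) (\<epsilon> * real n / 2) (c * real n) n E \<longrightarrow>
      ?degree_bounds ?K n E"
    by eventually_elim (intro ballI impI C4_saturated_degree_bounds; use assms in simp)
  have "whp p (?degree_bounds ?K)"
    by (rule whp_if_eventually_implied[OF eventually_bounds prob_not_locally_dense_tendsto_0
          prob_not_many_cross_edges_tendsto_0]) (use assms in auto)
  moreover have "0 < ?K"
    using assms by (simp add: add_pos_pos)
  ultimately show ?thesis
    by blast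
qed

end
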